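(* Let $l\ge-\tfrac12$. There exist constants $C_1,\dots,C_6$ depending only on $l$ such that for all $0<\eta<\xi$: $$V_1(z;\xi,\eta)\le C_1\frac{(z-\eta)^l\xi^l}{z^{2l}},\quad z\in\left(\tfrac{2\xi\eta}{\xi+\eta},\xi\right);$$ $$V_1(z;\xi,\eta)\le C_2\frac{(\xi-z)^l\eta^l}{z^{2l}}\left(\log\frac{(\xi-z)\eta}{(z-\eta)\xi}+C_3\right),\quad z\in\left(\eta,\tfrac{2\xi\eta}{\xi+\eta}\right);$$ $$V_2(z;\xi,\eta)\le C_4\frac{(\xi-\eta)^{1+2l}z}{\xi^{1+l}(\eta-z)^{1+l}},\quad z\in\left(0,\tfrac{\xi\eta}{2\xi-\eta}\right);$$ $$V_2(z;\xi,\eta)\le C_5\frac{(\xi-\eta)^l}{z^l}\left(\log\frac{z(\xi-\eta)}{\xi(\eta-z)}+C_6\right),\quad z\in\left(\tfrac{\xi\eta}{2\xi-\eta},\eta\right).$$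
   Context: Let ${}_2F_1$ denote the Gauss hypergeometric function (analytically continued to $(-\infty,0)$). For $0<\eta<z<\xi$ put $\sigma_1=\frac{(z-\xi)\eta}{(z-\eta)\xi}\in(-\infty,0)$ and $$V_1(z;\xi,\eta)=\frac{(z-\eta)^l\xi^l}{z^{2l}}\left|{}_2F_1(-l,-l;1;\sigma_1)\right|.$$ For $0<z<\eta<\xi$ put $\sigma_2=-\frac{z(\xi-\eta)}{\xi(\eta-z)}\in(-\infty,0)$ and $$V_2(z;\xi,\eta)=\frac{|\sin(\pi l)|\,\Gamma^2(1+l)}{\pi\,\Gamma(2+2l)}\frac{(\xi-\eta)^{1+2l}z}{\xi^{l+1}(\eta-z)^{l+1}}\left|{}_2F_1(1+l,1+l;2+2l;\sigma_2)\right|.$$ (These are the moduli $|v_1(z,0;\xi,\eta)|$, $|v_2(z,0;\xi,\eta)|$ of the two branches of the Riemann function of the relevant Goursat problem.) *)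

theory Defs
  imports "HOL-Analysis.Analysis"
begin

definition hyp2F1_series :: "real \<Rightarrow> real \<Rightarrow> real \<Rightarrow> real \<Rightarrow> real" where
  "hyp2F1_series a b c x =
     (\<Sum>n. pochhammer a n * pochhammer b n / (pochhammer c n * fact n) * x ^ n)"

text \<open>Gauss hypergeometric function; on the negative half-line it is the analytic
  continuation, given there by the Pfaff transformation
  F(a,b;c;x) = (1-x)^(-a) F(a,c-b;c;x/(x-1)), where x/(x-1) lies in (0,1).
  Only used for x < 0.\<close>
definition hyp2F1 :: "real \<Rightarrow> real \<Rightarrow> real \<Rightarrow> real \<Rightarrow> real" where
  "hyp2F1 a b c x =
     (if x < 0 then (1 - x) powr (- a) * hyp2F1_series a (c - b) c (x / (x - 1))
      else hyp2F1_series a b c x)"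

definition V1 :: "real \<Rightarrow> real \<Rightarrow> real \<Rightarrow> real \<Rightarrow> real" where
  "V1 l z \<xi> \<eta> =
     (let \<sigma> = ((z - \<xi>) * \<eta>) / ((z - \<eta>) * \<xi>) in
      (z - \<eta>) powr l * \<xi> powr l / z powr (2 * l) * \<bar>hyp2F1 (- l) (- l) 1 \<sigma>\<bar>)"

definition V2 :: "real \<Rightarrow> real \<Rightarrow> real \<Rightarrow> real \<Rightarrow> real" where
  "V2 l z \<xi> \<eta> =
     (let \<sigma> = - (z * (\<xi> - \<eta>)) / (\<xi> * (\<eta> - z)) in
      \<bar>sin (pi * l)\<bar> * (Gamma (1 + l))\<^sup>2 / (pi * Gamma (2 + 2 * l)) *
      ((\<xi> - \<eta>) powr (1 + 2 * l) * z / (\<xi> powr (l + 1) * (\<eta> - z) powr (l + 1))) *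
      \<bar>hyp2F1 (1 + l) (1 + l) (2 + 2 * l) \<sigma>\<bar>)"

end

(*
  Both V1 and V2 contain F(a, a; c; -r) with r > 0: a = -l, c = 1 and
  r = (xi - z) eta / ((z - eta) xi) for V1; a = 1 + l, c = 2 + 2l and
  r = z (xi - eta) / (xi (eta - z)) for V2. Pfaff's transformation writes
  F(a, a; c; -r) = (1 + r)^(-a) F(a, c - a; c; r / (1 + r)), a zero-balanced
  series whose coefficients are O(1/n); comparing with the series of
  -ln(1 - w) gives |F(a, a; c; -r)| <= M (1 + r)^(-a) (1 + ln (1 + r)).
  The thresholds 2 xi eta / (xi + eta) and xi eta / (2 xi - eta) are exactly
  where r = 1. For r <= 1 the right-hand side is bounded; for r >= 1 it is
  at most a constant times r^(-a) (ln r + 2), and r^(-a) combines with the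
  prefactor of V1 resp. V2 into the stated one.
*)

theory Submission
  imports Defs
begin

lemma bounded_if_eventually_decreasing:
  fixes g :: "nat \<Rightarrow> 'a::linorder"
  assumes "\<And>n. n \<ge> N \<Longrightarrow> g (Suc n) \<le> g n"
  shows "\<exists>M. \<forall>n. g n \<le> M"
proof -
  have tail: "g n \<le> g N" if "n \<ge> N" for n
    using that
  proof (induction n rule: dec_induct)
    case (step m)
    then show ?case using assms[of m] by (meson order.trans)
  qed simp
  have "g n \<le> Max (g ` {..N})" for n
  proof (cases "n \<le> N")
    case False
    then have "g n \<le> g N" using tail by simp
    also have "\<dots> \<le> Max (g ` {..N})" by (intro Max_ge) auto
    finally show ?thesis .
  qed (intro Max_ge; auto)
  then show ?thesis by blast
qed

definition hyp2F1_coeff :: "real \<Rightarrow> real \<Rightarrow> real \<Rightarrow> nat \<Rightarrow> real" where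
  "hyp2F1_coeff a b c n = pochhammer a n * pochhammer b n / (pochhammer c n * fact n)"

lemma hyp2F1_series_eq_coeff: "hyp2F1_series a b c x = (\<Sum>n. hyp2F1_coeff a b c n * x ^ n)"
  unfolding hyp2F1_series_def hyp2F1_coeff_def ..

lemma hyp2F1_coeff_0 [simp]: "hyp2F1_coeff a b c 0 = 1"
  by (simp add: hyp2F1_coeff_def)

lemma hyp2F1_coeff_Suc:
  assumes "c > 0"
  shows "hyp2F1_coeff a b c (Suc n) =
    hyp2F1_coeff a b c n * ((a + n) * (b + n) / ((c + n) * (n + 1)))"
proof -
  have "pochhammer c n > 0" "c + n > 0" using assms by (simp_all add: pochhammer_pos)
  then show ?thesis unfolding hyp2F1_coeff_def by (simp add: pochhammer_Suc field_simps)
qed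

text \<open>In the zero-balanced case \<open>c = a + b\<close> the coefficient ratio is
  \<open>1 - 1/n + O(1/n\<^sup>2)\<close>, so \<open>\<bar>coeff n\<bar> * (n + s)\<close> is eventually
  decreasing once the shift \<open>s\<close> dominates \<open>a * b\<close>.\<close>
lemma zero_balanced_hyp2F1_coeff_bound:
  assumes "c > 0" "c = a + b"
  shows "\<exists>M. \<forall>n. \<bar>hyp2F1_coeff a b c n\<bar> \<le> M / (real n + 1)"
proof -
  define s where "s = \<bar>a * b\<bar> + 1"
  define g where "g n = \<bar>hyp2F1_coeff a b c n\<bar> * (real n + s)" for n
  obtain N :: nat where N: "\<bar>a\<bar> + \<bar>b\<bar> + \<bar>s * (c - a * b) - a * b\<bar> \<le> real N"
    using real_arch_simple by blast
  have "g (Suc n) \<le> g n" if "n \<ge> N" for n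
  proof -
    define x where "x = real n"
    have x: "\<bar>a\<bar> + \<bar>b\<bar> + \<bar>s * (c - a * b) - a * b\<bar> \<le> x"
      using N that unfolding x_def by linarith
    have ab: "a + x \<ge> 0" "b + x \<ge> 0" using x by linarith+
    have den: "(c + x) * (x + 1) > 0" using assms(1) x by (simp add: add_pos_nonneg)
    have "(c + x) * (x + 1) * (x + s) - (a + x) * (b + x) * (x + 1 + s) =
        (s - a * b) * x + (s * (c - a * b) - a * b)"
      using assms(2) by (simp add: algebra_simps)
    moreover have "(s - a * b) * x \<ge> x"
      using x s_def by (intro mult_right_mono[of 1 "s - a * b" x, simplified]) auto
    ultimately have key: "(a + x) * (b + x) * (x + 1 + s) \<le> (c + x) * (x + 1) * (x + s)"
      using x by linarith
    define R where "R = (a + x) * (b + x) / ((c + x) * (x + 1))"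
    have "R \<ge> 0" unfolding R_def using ab den by simp
    have "g (Suc n) = \<bar>hyp2F1_coeff a b c n * R\<bar> * (x + 1 + s)"
      unfolding g_def hyp2F1_coeff_Suc[OF assms(1)] R_def x_def by (simp add: add_ac)
    also have "\<dots> = \<bar>hyp2F1_coeff a b c n\<bar> * (R * (x + 1 + s))"
      using \<open>R \<ge> 0\<close> by (simp add: abs_mult)
    also have "\<dots> \<le> \<bar>hyp2F1_coeff a b c n\<bar> * (x + s)"
      using key den unfolding R_def by (intro mult_left_mono) (simp_all add: divide_le_eq mult_ac)
    finally show ?thesis unfolding g_def x_def .
  qed
  then obtain M where M: "\<And>n. g n \<le> M"
    using bounded_if_eventually_decreasing by blast
  have "\<bar>hyp2F1_coeff a b c n\<bar> * (real n + 1) \<le> M" for n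
  proof -
    have "\<bar>hyp2F1_coeff a b c n\<bar> * (real n + 1) \<le> g n"
      unfolding g_def s_def by (intro mult_left_mono) auto
    then show ?thesis using M[of n] by linarith
  qed
  then show ?thesis by (auto simp: field_simps)
qed

lemma hyp2F1_series_abs_le:
  assumes M: "\<And>n. \<bar>hyp2F1_coeff a b c n\<bar> \<le> M / (real n + 1)"
    and w: "0 \<le> w" "w < 1"
  shows "\<bar>hyp2F1_series a b c w\<bar> \<le> M * (1 - ln (1 - w))"
proof -
  define f where "f n = (if n = 0 then 1 else 0) + w ^ n / real n" for n
  have "(\<lambda>n. - (w ^ n / real n)) sums ln (1 - w)"
    using ln_series'[of "- w"] w by simp
  then have "(\<lambda>n. w ^ n / real n) sums (- ln (1 - w))"
    using sums_minus by fastforce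
  then have f: "f sums (1 - ln (1 - w))"
    unfolding f_def using sums_add[OF sums_single[of 0 "\<lambda>_. 1"]] by fastforce
  have M1: "M \<ge> 1" using M[of 0] by simp
  have term_le: "norm (hyp2F1_coeff a b c n * w ^ n) \<le> M * f n" for n
  proof (cases "n = 0")
    case False
    have "norm (hyp2F1_coeff a b c n * w ^ n) = \<bar>hyp2F1_coeff a b c n\<bar> * w ^ n"
      using w by (simp add: abs_mult)
    also have "\<dots> \<le> M / (real n + 1) * w ^ n"
      using w by (intro mult_right_mono M) auto
    also have "\<dots> \<le> M / real n * w ^ n"
      using False M1 w by (intro mult_right_mono divide_left_mono) auto
    finally show ?thesis using False by (simp add: f_def)
  qed (use M1 in \<open>simp add: f_def\<close>)
  have Mf: "(\<lambda>n. M * f n) sums (M * (1 - ln (1 - w)))"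
    using sums_mult[OF f] .
  have summable: "summable (\<lambda>n. norm (hyp2F1_coeff a b c n * w ^ n))"
    by (rule summable_comparison_test[OF _ sums_summable[OF Mf]]) (use term_le in auto)
  have "\<bar>hyp2F1_series a b c w\<bar> \<le> (\<Sum>n. norm (hyp2F1_coeff a b c n * w ^ n))"
    unfolding hyp2F1_series_eq_coeff using summable_norm[OF summable] by simp
  also have "\<dots> \<le> M * (1 - ln (1 - w))"
    using suminf_le[OF term_le summable sums_summable[OF Mf]] Mf by (simp add: sums_iff)
  finally show ?thesis .
qed

lemma hyp2F1_equal_params_neg_bound:
  assumes "c > 0"
  obtains M where "M \<ge> 0"
    "\<forall>r > 0. \<bar>hyp2F1 a a c (- r)\<bar> \<le> M * ((1 + r) powr (- a) * (1 + ln (1 + r)))"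
proof -
  obtain M where M: "\<And>n. \<bar>hyp2F1_coeff a (c - a) c n\<bar> \<le> M / (real n + 1)"
    using zero_balanced_hyp2F1_coeff_bound[of c a "c - a"] assms by auto
  have "\<bar>hyp2F1 a a c (- r)\<bar> \<le> M * ((1 + r) powr (- a) * (1 + ln (1 + r)))" if r: "r > 0" for r
  proof -
    define w where "w = - r / (- r - 1)"
    have w_eq: "w = r / (1 + r)" using r unfolding w_def by (simp add: field_simps)
    have w: "0 \<le> w" "w < 1" using r unfolding w_eq by (auto simp: field_simps)
    have ln_w: "ln (1 - w) = - ln (1 + r)"
      using r unfolding w_eq by (simp add: field_simps ln_div)
    have "\<bar>hyp2F1 a a c (- r)\<bar> = (1 + r) powr (- a) * \<bar>hyp2F1_series a (c - a) c w\<bar>"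
      using r unfolding hyp2F1_def w_def by (simp add: abs_mult)
    also have "\<dots> \<le> (1 + r) powr (- a) * (M * (1 - ln (1 - w)))"
      by (intro mult_left_mono hyp2F1_series_abs_le[OF M w]) auto
    finally show ?thesis unfolding ln_w by (simp add: mult_ac)
  qed
  moreover have "M \<ge> 0" using M[of 0] by simp
  ultimately show thesis using that by blast
qed

lemma powr_le_two_powr_abs:
  fixes x a :: real
  assumes "1 \<le> x" "x \<le> 2"
  shows "x powr a \<le> 2 powr \<bar>a\<bar>"
proof (cases "a \<ge> 0")
  case True
  then show ?thesis using assms by (simp add: powr_mono2)
next
  case False
  then have "x powr a \<le> x powr 0" using assms by (intro powr_mono) auto
  also have "\<dots> \<le> 2 powr \<bar>a\<bar>" using assms by (simp add: ge_one_powr_ge_zero)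
  finally show ?thesis .
qed

lemma one_plus_powr_mult_ln_le_const:
  fixes r a :: real
  assumes "0 \<le> r" "r \<le> 1"
  shows "(1 + r) powr a * (1 + ln (1 + r)) \<le> 2 powr \<bar>a\<bar> * 2"
proof (rule mult_mono)
  show "(1 + r) powr a \<le> 2 powr \<bar>a\<bar>" using assms by (intro powr_le_two_powr_abs) auto
  show "1 + ln (1 + r) \<le> 2" using ln_le_minus_one[of "1 + r"] assms by simp
qed (use assms in auto)

lemma one_plus_powr_mult_ln_le_log:
  fixes r a :: real
  assumes "1 \<le> r"
  shows "(1 + r) powr a * (1 + ln (1 + r)) \<le> 2 powr \<bar>a\<bar> * r powr a * (ln r + 2)"
proof -
  define t where "t = (1 + r) / r"
  have t: "1 \<le> t" "t \<le> 2" and r_t: "1 + r = r * t"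
    using assms unfolding t_def by (auto simp: field_simps)
  have "(1 + r) powr a = r powr a * t powr a"
    unfolding r_t using assms t by (simp add: powr_mult)
  also have "\<dots> \<le> r powr a * 2 powr \<bar>a\<bar>"
    using t by (intro mult_left_mono powr_le_two_powr_abs) auto
  finally have powr_le: "(1 + r) powr a \<le> r powr a * 2 powr \<bar>a\<bar>" .
  have "ln (1 + r) = ln r + ln t" unfolding r_t using assms t by (simp add: ln_mult)
  moreover have "ln t \<le> t - 1" using t by (intro ln_le_minus_one) auto
  ultimately have ln_le: "1 + ln (1 + r) \<le> ln r + 2" using t by simp
  have "(1 + r) powr a * (1 + ln (1 + r)) \<le> (r powr a * 2 powr \<bar>a\<bar>) * (ln r + 2)"
    using assms by (intro mult_mono powr_le ln_le) auto
  then show ?thesis by (simp add: mult_ac)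
qed

lemma harmonic_mean_strict_bounds:
  fixes \<xi> \<eta> :: real
  assumes "0 < \<eta>" "\<eta> < \<xi>"
  shows "\<eta> < 2 * \<xi> * \<eta> / (\<xi> + \<eta>)" "2 * \<xi> * \<eta> / (\<xi> + \<eta>) < \<xi>"
proof -
  have "\<eta> * \<eta> < \<xi> * \<eta>" "\<xi> * \<eta> < \<xi> * \<xi>" using assms by simp_all
  then show "\<eta> < 2 * \<xi> * \<eta> / (\<xi> + \<eta>)" "2 * \<xi> * \<eta> / (\<xi> + \<eta>) < \<xi>"
    using assms by (simp_all add: field_simps)
qed

lemma V2_threshold_strict_bounds:
  fixes \<xi> \<eta> :: real
  assumes "0 < \<eta>" "\<eta> < \<xi>"
  shows "0 < \<xi> * \<eta> / (2 * \<xi> - \<eta>)" "\<xi> * \<eta> / (2 * \<xi> - \<eta>) < \<eta>"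
proof -
  have "\<eta> * \<eta> < \<xi> * \<eta>" using assms by simp
  then show "0 < \<xi> * \<eta> / (2 * \<xi> - \<eta>)" "\<xi> * \<eta> / (2 * \<xi> - \<eta>) < \<eta>"
    using assms by (simp_all add: field_simps)
qed

lemma V1_le_hyp2F1_bound:
  assumes F: "\<forall>r > 0.
      \<bar>hyp2F1 (- l) (- l) 1 (- r)\<bar> \<le> M * ((1 + r) powr l * (1 + ln (1 + r)))"
    and r: "r = (\<xi> - z) * \<eta> / ((z - \<eta>) * \<xi>)"
    and "0 < \<eta>" "\<eta> < z" "z < \<xi>"
  shows "V1 l z \<xi> \<eta> \<le>
    M * ((z - \<eta>) powr l * \<xi> powr l / z powr (2 * l)) * ((1 + r) powr l * (1 + ln (1 + r)))"
proof -
  have "(z - \<xi>) * \<eta> = - ((\<xi> - z) * \<eta>)" by (simp add: algebra_simps)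
  then have \<sigma>: "(z - \<xi>) * \<eta> / ((z - \<eta>) * \<xi>) = - r" unfolding r by (simp only: minus_divide_left)
  have "r > 0" unfolding r using assms(3-) by simp
  have "V1 l z \<xi> \<eta> = ((z - \<eta>) powr l * \<xi> powr l / z powr (2 * l)) * \<bar>hyp2F1 (- l) (- l) 1 (- r)\<bar>"
    unfolding V1_def Let_def \<sigma> ..
  also have "\<dots> \<le> ((z - \<eta>) powr l * \<xi> powr l / z powr (2 * l)) *
      (M * ((1 + r) powr l * (1 + ln (1 + r))))"
    using F \<open>r > 0\<close> by (intro mult_left_mono) simp_all
  finally show ?thesis by (simp add: mult_ac)
qed

text \<open>Only \<open>\<bar>V2_gamma_factor l\<bar>\<close> enters the constants, so no sign information
  on \<open>Gamma (2 + 2 * l)\<close> is needed.\<close>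
definition V2_gamma_factor :: "real \<Rightarrow> real" where
  "V2_gamma_factor l = \<bar>sin (pi * l)\<bar> * (Gamma (1 + l))\<^sup>2 / (pi * Gamma (2 + 2 * l))"

lemma V2_le_hyp2F1_bound:
  assumes F: "\<forall>r > 0.
      \<bar>hyp2F1 (1 + l) (1 + l) (2 + 2 * l) (- r)\<bar> \<le> M * ((1 + r) powr (- (1 + l)) * (1 + ln (1 + r)))"
    and r: "r = z * (\<xi> - \<eta>) / (\<xi> * (\<eta> - z))"
    and "0 < z" "z < \<eta>" "\<eta> < \<xi>"
  shows "V2 l z \<xi> \<eta> \<le> \<bar>V2_gamma_factor l\<bar> * M *
    ((\<xi> - \<eta>) powr (1 + 2 * l) * z / (\<xi> powr (1 + l) * (\<eta> - z) powr (1 + l))) *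
    ((1 + r) powr (- (1 + l)) * (1 + ln (1 + r)))"
proof -
  define P where "P = (\<xi> - \<eta>) powr (1 + 2 * l) * z / (\<xi> powr (1 + l) * (\<eta> - z) powr (1 + l))"
  have "P \<ge> 0" unfolding P_def using assms(3-) by simp
  have \<sigma>: "- (z * (\<xi> - \<eta>)) / (\<xi> * (\<eta> - z)) = - r" unfolding r by (simp only: minus_divide_left)
  have "r > 0" unfolding r using assms(3-) by simp
  have "V2 l z \<xi> \<eta> = V2_gamma_factor l * P * \<bar>hyp2F1 (1 + l) (1 + l) (2 + 2 * l) (- r)\<bar>"
    unfolding V2_def V2_gamma_factor_def Let_def \<sigma> P_def by (simp add: add.commute[of l 1])
  also have "\<dots> \<le> \<bar>V2_gamma_factor l\<bar> * P * \<bar>hyp2F1 (1 + l) (1 + l) (2 + 2 * l) (- r)\<bar>"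
    using \<open>P \<ge> 0\<close> by (intro mult_right_mono) auto
  also have "\<dots> \<le> \<bar>V2_gamma_factor l\<bar> * P * (M * ((1 + r) powr (- (1 + l)) * (1 + ln (1 + r))))"
    using \<open>P \<ge> 0\<close> F \<open>r > 0\<close> by (intro mult_left_mono) simp_all
  finally show ?thesis unfolding P_def by (simp add: mult_ac)
qed

lemma V1_bound_near_xi:
  assumes "M \<ge> 0" and F: "\<forall>r > 0.
      \<bar>hyp2F1 (- l) (- l) 1 (- r)\<bar> \<le> M * ((1 + r) powr l * (1 + ln (1 + r)))"
    and geom: "0 < \<eta>" "\<eta> < \<xi>" "2 * \<xi> * \<eta> / (\<xi> + \<eta>) < z" "z < \<xi>"
  shows "V1 l z \<xi> \<eta> \<le> 2 powr \<bar>l\<bar> * 2 * M * ((z - \<eta>) powr l * \<xi> powr l / z powr (2 * l))"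
proof -
  define r where "r = (\<xi> - z) * \<eta> / ((z - \<eta>) * \<xi>)"
  have z: "2 * \<xi> * \<eta> < z * (\<xi> + \<eta>)" using geom by (simp add: divide_less_eq)
  have "\<eta> < z" using harmonic_mean_strict_bounds(1)[OF geom(1,2)] geom by linarith
  with z geom have "0 \<le> r" "r \<le> 1" unfolding r_def by (simp_all add: divide_le_eq algebra_simps)
  have "V1 l z \<xi> \<eta> \<le>
      M * ((z - \<eta>) powr l * \<xi> powr l / z powr (2 * l)) * ((1 + r) powr l * (1 + ln (1 + r)))"
    using geom \<open>\<eta> < z\<close> by (intro V1_le_hyp2F1_bound[OF F r_def])
  also have "\<dots> \<le> M * ((z - \<eta>) powr l * \<xi> powr l / z powr (2 * l)) * (2 powr \<bar>l\<bar> * 2)"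
    using \<open>M \<ge> 0\<close> \<open>0 \<le> r\<close> \<open>r \<le> 1\<close> by (intro mult_left_mono one_plus_powr_mult_ln_le_const) auto
  finally show ?thesis by (simp add: mult_ac)
qed

lemma V1_bound_near_eta:
  assumes "M \<ge> 0" and F: "\<forall>r > 0.
      \<bar>hyp2F1 (- l) (- l) 1 (- r)\<bar> \<le> M * ((1 + r) powr l * (1 + ln (1 + r)))"
    and geom: "0 < \<eta>" "\<eta> < \<xi>" "\<eta> < z" "z < 2 * \<xi> * \<eta> / (\<xi> + \<eta>)"
  shows "V1 l z \<xi> \<eta> \<le> 2 powr \<bar>l\<bar> * M * ((\<xi> - z) powr l * \<eta> powr l / z powr (2 * l)) *
    (ln ((\<xi> - z) * \<eta> / ((z - \<eta>) * \<xi>)) + 2)"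
proof -
  define r where "r = (\<xi> - z) * \<eta> / ((z - \<eta>) * \<xi>)"
  define P where "P = (z - \<eta>) powr l * \<xi> powr l / z powr (2 * l)"
  have z: "z * (\<xi> + \<eta>) < 2 * \<xi> * \<eta>" using geom by (simp add: less_divide_eq)
  have "z < \<xi>" using harmonic_mean_strict_bounds(2)[OF geom(1,2)] geom by linarith
  with z geom have "1 \<le> r" unfolding r_def by (simp add: le_divide_eq algebra_simps)
  have "P * r powr l = (\<xi> - z) powr l * \<eta> powr l / z powr (2 * l)"
    unfolding P_def r_def using geom \<open>z < \<xi>\<close> by (simp add: powr_divide powr_mult)
  have "V1 l z \<xi> \<eta> \<le> M * P * ((1 + r) powr l * (1 + ln (1 + r)))"
    unfolding P_def using geom \<open>z < \<xi>\<close> by (intro V1_le_hyp2F1_bound[OF F r_def])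
  also have "\<dots> \<le> M * P * (2 powr \<bar>l\<bar> * r powr l * (ln r + 2))"
    using \<open>M \<ge> 0\<close> \<open>1 \<le> r\<close> by (intro mult_left_mono one_plus_powr_mult_ln_le_log) (auto simp: P_def)
  also have "\<dots> = 2 powr \<bar>l\<bar> * M * (P * r powr l) * (ln r + 2)" by (simp add: mult_ac)
  finally have "V1 l z \<xi> \<eta> \<le> 2 powr \<bar>l\<bar> * M * ((\<xi> - z) powr l * \<eta> powr l / z powr (2 * l)) *
      (ln r + 2)" unfolding \<open>P * r powr l = _\<close> .
  then show ?thesis unfolding r_def .
qed

lemma V2_bound_near_zero:
  assumes "M \<ge> 0" and F: "\<forall>r > 0.
      \<bar>hyp2F1 (1 + l) (1 + l) (2 + 2 * l) (- r)\<bar> \<le> M * ((1 + r) powr (- (1 + l)) * (1 + ln (1 + r)))"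
    and geom: "0 < \<eta>" "\<eta> < \<xi>" "0 < z" "z < \<xi> * \<eta> / (2 * \<xi> - \<eta>)"
  shows "V2 l z \<xi> \<eta> \<le> \<bar>V2_gamma_factor l\<bar> * (2 powr \<bar>1 + l\<bar> * 2) * M *
    ((\<xi> - \<eta>) powr (1 + 2 * l) * z / (\<xi> powr (1 + l) * (\<eta> - z) powr (1 + l)))"
proof -
  define r where "r = z * (\<xi> - \<eta>) / (\<xi> * (\<eta> - z))"
  define P where "P = (\<xi> - \<eta>) powr (1 + 2 * l) * z / (\<xi> powr (1 + l) * (\<eta> - z) powr (1 + l))"
  have z: "z * (2 * \<xi> - \<eta>) < \<xi> * \<eta>" using geom by (simp add: less_divide_eq)
  have "z < \<eta>" using V2_threshold_strict_bounds(2)[OF geom(1,2)] geom by linarith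
  with z geom have "0 \<le> r" "r \<le> 1" unfolding r_def by (simp_all add: divide_le_eq algebra_simps)
  have "V2 l z \<xi> \<eta> \<le> \<bar>V2_gamma_factor l\<bar> * M * P * ((1 + r) powr (- (1 + l)) * (1 + ln (1 + r)))"
    unfolding P_def using geom \<open>z < \<eta>\<close> by (intro V2_le_hyp2F1_bound[OF F r_def])
  also have "\<dots> \<le> \<bar>V2_gamma_factor l\<bar> * M * P * (2 powr \<bar>1 + l\<bar> * 2)"
    using one_plus_powr_mult_ln_le_const[OF \<open>0 \<le> r\<close> \<open>r \<le> 1\<close>, of "- (1 + l)", unfolded abs_minus_cancel]
      \<open>M \<ge> 0\<close> \<open>z < \<eta>\<close> geom
    by (intro mult_left_mono) (auto simp: P_def)
  finally show ?thesis unfolding P_def by (simp add: mult_ac)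
qed

lemma V2_bound_near_eta:
  assumes "M \<ge> 0" and F: "\<forall>r > 0.
      \<bar>hyp2F1 (1 + l) (1 + l) (2 + 2 * l) (- r)\<bar> \<le> M * ((1 + r) powr (- (1 + l)) * (1 + ln (1 + r)))"
    and geom: "0 < \<eta>" "\<eta> < \<xi>" "\<xi> * \<eta> / (2 * \<xi> - \<eta>) < z" "z < \<eta>"
  shows "V2 l z \<xi> \<eta> \<le> \<bar>V2_gamma_factor l\<bar> * 2 powr \<bar>1 + l\<bar> * M * ((\<xi> - \<eta>) powr l / z powr l) *
    (ln (z * (\<xi> - \<eta>) / (\<xi> * (\<eta> - z))) + 2)"
proof -
  define r where "r = z * (\<xi> - \<eta>) / (\<xi> * (\<eta> - z))"
  define P where "P = (\<xi> - \<eta>) powr (1 + 2 * l) * z / (\<xi> powr (1 + l) * (\<eta> - z) powr (1 + l))"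
  have z: "\<xi> * \<eta> < z * (2 * \<xi> - \<eta>)" using geom by (simp add: divide_less_eq)
  have "0 < z" using V2_threshold_strict_bounds(1)[OF geom(1,2)] geom by linarith
  with z geom have "1 \<le> r" unfolding r_def by (simp add: le_divide_eq algebra_simps)
  have "P * r powr (- (1 + l)) = (\<xi> - \<eta>) powr l / z powr l"
  proof -
    have "r powr (1 + l) =
        z powr (1 + l) * (\<xi> - \<eta>) powr (1 + l) / (\<xi> powr (1 + l) * (\<eta> - z) powr (1 + l))"
      unfolding r_def using geom \<open>0 < z\<close> by (simp add: powr_divide powr_mult)
    moreover have "z powr (1 + l) = z * z powr l"
      using \<open>0 < z\<close> by (simp add: powr_add)
    moreover have "(\<xi> - \<eta>) powr (1 + 2 * l) = (\<xi> - \<eta>) powr (1 + l) * (\<xi> - \<eta>) powr l"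
      by (simp add: powr_add[symmetric] algebra_simps)
    ultimately have "P = r powr (1 + l) * ((\<xi> - \<eta>) powr l / z powr l)"
      unfolding P_def using geom \<open>0 < z\<close> by (simp add: field_simps)
    moreover have "r powr (1 + l) * r powr (- (1 + l)) = 1"
      using \<open>1 \<le> r\<close> by (simp add: powr_add[symmetric])
    ultimately show ?thesis by (simp add: mult_ac)
  qed
  have "V2 l z \<xi> \<eta> \<le> \<bar>V2_gamma_factor l\<bar> * M * P * ((1 + r) powr (- (1 + l)) * (1 + ln (1 + r)))"
    unfolding P_def using geom \<open>0 < z\<close> by (intro V2_le_hyp2F1_bound[OF F r_def])
  also have "\<dots> \<le> \<bar>V2_gamma_factor l\<bar> * M * P * (2 powr \<bar>1 + l\<bar> * r powr (- (1 + l)) * (ln r + 2))"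
    using one_plus_powr_mult_ln_le_log[OF \<open>1 \<le> r\<close>, of "- (1 + l)", unfolded abs_minus_cancel]
      \<open>M \<ge> 0\<close> \<open>0 < z\<close> geom
    by (intro mult_left_mono) (auto simp: P_def)
  also have "\<dots> = \<bar>V2_gamma_factor l\<bar> * 2 powr \<bar>1 + l\<bar> * M * (P * r powr (- (1 + l))) * (ln r + 2)"
    by (simp add: mult_ac)
  finally have "V2 l z \<xi> \<eta> \<le> \<bar>V2_gamma_factor l\<bar> * 2 powr \<bar>1 + l\<bar> * M * ((\<xi> - \<eta>) powr l / z powr l) *
      (ln r + 2)" unfolding \<open>P * r powr (- (1 + l)) = _\<close> .
  then show ?thesis unfolding r_def .
qed

theorem lemmaA1:
  fixes l :: real
  assumes "l \<ge> - 1 / 2"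
  shows "\<exists>C1 C2 C3 C4 C5 C6 :: real. \<forall>\<xi> \<eta> :: real. 0 < \<eta> \<and> \<eta> < \<xi> \<longrightarrow>
    (\<forall>z. 2 * \<xi> * \<eta> / (\<xi> + \<eta>) < z \<and> z < \<xi> \<longrightarrow>
       V1 l z \<xi> \<eta> \<le> C1 * ((z - \<eta>) powr l * \<xi> powr l / z powr (2 * l))) \<and>
    (\<forall>z. \<eta> < z \<and> z < 2 * \<xi> * \<eta> / (\<xi> + \<eta>) \<longrightarrow>
       V1 l z \<xi> \<eta> \<le> C2 * ((\<xi> - z) powr l * \<eta> powr l / z powr (2 * l)) *
         (ln (((\<xi> - z) * \<eta>) / ((z - \<eta>) * \<xi>)) + C3)) \<and>
    (\<forall>z. 0 < z \<and> z < \<xi> * \<eta> / (2 * \<xi> - \<eta>) \<longrightarrow>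
       V2 l z \<xi> \<eta> \<le> C4 * ((\<xi> - \<eta>) powr (1 + 2 * l) * z /
         (\<xi> powr (1 + l) * (\<eta> - z) powr (1 + l)))) \<and>
    (\<forall>z. \<xi> * \<eta> / (2 * \<xi> - \<eta>) < z \<and> z < \<eta> \<longrightarrow>
       V2 l z \<xi> \<eta> \<le> C5 * ((\<xi> - \<eta>) powr l / z powr l) *
         (ln ((z * (\<xi> - \<eta>)) / (\<xi> * (\<eta> - z))) + C6))"
proof -
  obtain M1 where M1: "M1 \<ge> 0"
    "\<forall>r > 0. \<bar>hyp2F1 (- l) (- l) 1 (- r)\<bar> \<le> M1 * ((1 + r) powr l * (1 + ln (1 + r)))"
    using hyp2F1_equal_params_neg_bound[of 1 "- l"] by auto
  obtain M2 where M2: "M2 \<ge> 0"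
    "\<forall>r > 0. \<bar>hyp2F1 (1 + l) (1 + l) (2 + 2 * l) (- r)\<bar> \<le>
      M2 * ((1 + r) powr (- (1 + l)) * (1 + ln (1 + r)))"
    using hyp2F1_equal_params_neg_bound[of "2 + 2 * l" "1 + l"] assms by auto
  show ?thesis
    apply (rule exI[of _ "2 powr \<bar>l\<bar> * 2 * M1"], rule exI[of _ "2 powr \<bar>l\<bar> * M1"],
        rule exI[of _ 2], rule exI[of _ "\<bar>V2_gamma_factor l\<bar> * (2 powr \<bar>1 + l\<bar> * 2) * M2"],
        rule exI[of _ "\<bar>V2_gamma_factor l\<bar> * 2 powr \<bar>1 + l\<bar> * M2"], rule exI[of _ 2])
    using V1_bound_near_xi[OF M1] V1_bound_near_eta[OF M1]
      V2_bound_near_zero[OF M2] V2_bound_near_eta[OF M2]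
    by (intro allI impI conjI; elim conjE; simp)
qed

end
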